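(* Let $\mathcal{A}\subseteq\mathcal{B}$ be sub-$\sigma$-algebras of a complete probability space $(\Omega,\mathcal{F},P)$. Let $x:L_\infty(\mathcal{B})\to L_\infty(\mathcal{A})$ be a linear operator such that \[x(X)\le M(Y)\qquad\text{for all } X\in L_\infty(\mathcal{B}),\ Y\in L^+_\infty(\mathcal{B}) \text{ with } X\le Y,\] for some sublinear operator $M:L^+_\infty(\mathcal{B})\to L^+_\infty(\mathcal{A})$. Then $x$ is monotone. Moreover: (i) if $M$ is weak $\mathcal{A}$-homogeneous, then $x$ is weak $\mathcal{A}$-homogeneous; (ii) if $M$ is regular, then $x$ is continuous from above.
   Context: All (in)equalities hold $P$-a.s. Sublinear: $M(X+Y)\le M(X)+M(Y)$, $M(\lambda X)=\lambda M(X)$ for real $\lambda\ge0$. Weak $\mathcal{A}$-homogeneous: $T(1_AX)=1_AT(X)$ for every $A\in\mathcal{A}$ and every $X$ in the domain of the operator $T$. Regular: for every nonincreasing sequence $X_n\downarrow0$ $P$-a.s., $M(X_n)\to0$ $P$-a.s. Continuous from above: for every nonincreasing sequence $X_n$ with $P$-a.s. limit $X$, $x(X_n)\downarrow x(X)$ $P$-a.s. *)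

theory Defs
  imports "HOL-Probability.Probability"
begin

text \<open>L-infinity of a sub-sigma-algebra B of the probability space P, represented by
  bounded-a.s. B-measurable real functions; all (in)equalities are P-a.s.\<close>

definition Linf :: "'a measure \<Rightarrow> 'a measure \<Rightarrow> ('a \<Rightarrow> real) set" where
  "Linf P B = {X. X \<in> borel_measurable B \<and> (\<exists>C. AE w in P. \<bar>X w\<bar> \<le> C)}"

definition Linf_pos :: "'a measure \<Rightarrow> 'a measure \<Rightarrow> ('a \<Rightarrow> real) set" where
  "Linf_pos P B = {X \<in> Linf P B. AE w in P. 0 \<le> X w}"

definition operator_on :: "'a measure \<Rightarrow> ('a \<Rightarrow> real) set \<Rightarrow> ('a \<Rightarrow> real) set
    \<Rightarrow> (('a \<Rightarrow> real) \<Rightarrow> ('a \<Rightarrow> real)) \<Rightarrow> bool" where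
  "operator_on P D E T \<longleftrightarrow> (\<forall>X\<in>D. T X \<in> E) \<and>
     (\<forall>X\<in>D. \<forall>Y\<in>D. (AE w in P. X w = Y w) \<longrightarrow> (AE w in P. T X w = T Y w))"

definition linear_op :: "'a measure \<Rightarrow> ('a \<Rightarrow> real) set
    \<Rightarrow> (('a \<Rightarrow> real) \<Rightarrow> ('a \<Rightarrow> real)) \<Rightarrow> bool" where
  "linear_op P D T \<longleftrightarrow>
     (\<forall>X\<in>D. \<forall>Y\<in>D. AE w in P. T (\<lambda>v. X v + Y v) w = T X w + T Y w) \<and>
     (\<forall>X\<in>D. \<forall>c::real. AE w in P. T (\<lambda>v. c * X v) w = c * T X w)"

definition sublinear_op :: "'a measure \<Rightarrow> ('a \<Rightarrow> real) set
    \<Rightarrow> (('a \<Rightarrow> real) \<Rightarrow> ('a \<Rightarrow> real)) \<Rightarrow> bool" where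
  "sublinear_op P D T \<longleftrightarrow>
     (\<forall>X\<in>D. \<forall>Y\<in>D. AE w in P. T (\<lambda>v. X v + Y v) w \<le> T X w + T Y w) \<and>
     (\<forall>X\<in>D. \<forall>c::real. 0 \<le> c \<longrightarrow> (AE w in P. T (\<lambda>v. c * X v) w = c * T X w))"

definition monotone_op :: "'a measure \<Rightarrow> ('a \<Rightarrow> real) set
    \<Rightarrow> (('a \<Rightarrow> real) \<Rightarrow> ('a \<Rightarrow> real)) \<Rightarrow> bool" where
  "monotone_op P D T \<longleftrightarrow>
     (\<forall>X\<in>D. \<forall>Y\<in>D. (AE w in P. X w \<le> Y w) \<longrightarrow> (AE w in P. T X w \<le> T Y w))"

definition weak_hom_op :: "'a measure \<Rightarrow> 'a measure \<Rightarrow> ('a \<Rightarrow> real) set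
    \<Rightarrow> (('a \<Rightarrow> real) \<Rightarrow> ('a \<Rightarrow> real)) \<Rightarrow> bool" where
  "weak_hom_op P A D T \<longleftrightarrow>
     (\<forall>S\<in>sets A. \<forall>X\<in>D.
        AE w in P. T (\<lambda>v. indicator S v * X v) w = indicator S w * T X w)"

definition regular_op :: "'a measure \<Rightarrow> ('a \<Rightarrow> real) set
    \<Rightarrow> (('a \<Rightarrow> real) \<Rightarrow> ('a \<Rightarrow> real)) \<Rightarrow> bool" where
  "regular_op P D T \<longleftrightarrow>
     (\<forall>Xs :: nat \<Rightarrow> 'a \<Rightarrow> real. (\<forall>n. Xs n \<in> D) \<longrightarrow>
        (AE w in P. \<forall>n. Xs (Suc n) w \<le> Xs n w) \<longrightarrow>
        (AE w in P. (\<lambda>n. Xs n w) \<longlonglongrightarrow> 0) \<longrightarrow>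
        (AE w in P. (\<lambda>n. T (Xs n) w) \<longlonglongrightarrow> 0))"

definition cont_from_above_op :: "'a measure \<Rightarrow> ('a \<Rightarrow> real) set
    \<Rightarrow> (('a \<Rightarrow> real) \<Rightarrow> ('a \<Rightarrow> real)) \<Rightarrow> bool" where
  "cont_from_above_op P D T \<longleftrightarrow>
     (\<forall>(Xs :: nat \<Rightarrow> 'a \<Rightarrow> real) X. (\<forall>n. Xs n \<in> D) \<longrightarrow> X \<in> D \<longrightarrow>
        (AE w in P. \<forall>n. Xs (Suc n) w \<le> Xs n w) \<longrightarrow>
        (AE w in P. (\<lambda>n. Xs n w) \<longlonglongrightarrow> X w) \<longrightarrow>
        (AE w in P. (\<forall>n. T (Xs (Suc n)) w \<le> T (Xs n) w) \<and>
                    (\<lambda>n. T (Xs n) w) \<longlonglongrightarrow> T X w))"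

end

theory Submission
  imports Defs
begin

text \<open>If X \<le> Y then x(X) - x(Y) = x(X - Y) \<le> M(0) = 0, so x is monotone. Dominating x(Z) and
  x(-Z) by M(|Z|) gives |x(Z)| \<le> M(|Z|); when M is weak A-homogeneous, M(1_S |X|) vanishes off S,
  hence x(1_S X) vanishes off S and x(1_{S^c} X) vanishes on S, which forces x(1_S X) = 1_S x(X).
  For X_n \<down> X, the bound 0 \<le> x(X_n) - x(X) = x(X_n - X) \<le> M(X_n - X) \<rightarrow> 0 gives continuity
  from above when M is regular.\<close>

definition dominated_op :: "'a measure \<Rightarrow> ('a \<Rightarrow> real) set \<Rightarrow> ('a \<Rightarrow> real) set
    \<Rightarrow> (('a \<Rightarrow> real) \<Rightarrow> ('a \<Rightarrow> real)) \<Rightarrow> (('a \<Rightarrow> real) \<Rightarrow> ('a \<Rightarrow> real)) \<Rightarrow> bool" where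
  "dominated_op P D D' x M \<longleftrightarrow>
     (\<forall>X\<in>D. \<forall>Y\<in>D'. (AE w in P. X w \<le> Y w) \<longrightarrow> (AE w in P. x X w \<le> M Y w))"

lemma dominated_opD:
  "dominated_op P D D' x M \<Longrightarrow> X \<in> D \<Longrightarrow> Y \<in> D' \<Longrightarrow> (AE w in P. X w \<le> Y w)
    \<Longrightarrow> AE w in P. x X w \<le> M Y w"
  by (auto simp: dominated_op_def)

lemma Linf_add: "X \<in> Linf P B \<Longrightarrow> Y \<in> Linf P B \<Longrightarrow> (\<lambda>v. X v + Y v) \<in> Linf P B"
proof -
  assume XY: "X \<in> Linf P B" "Y \<in> Linf P B"
  then obtain C D where "AE w in P. \<bar>X w\<bar> \<le> C" "AE w in P. \<bar>Y w\<bar> \<le> D"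
    by (auto simp: Linf_def)
  then have "AE w in P. \<bar>X w + Y w\<bar> \<le> C + D" by eventually_elim auto
  with XY show ?thesis by (auto simp: Linf_def)
qed

lemma Linf_cmult: "X \<in> Linf P B \<Longrightarrow> (\<lambda>v. c * X v) \<in> Linf P B"
proof -
  assume X: "X \<in> Linf P B"
  then obtain C where "AE w in P. \<bar>X w\<bar> \<le> C" by (auto simp: Linf_def)
  then have "AE w in P. \<bar>c * X w\<bar> \<le> \<bar>c\<bar> * C"
    by eventually_elim (auto simp: abs_mult mult_left_mono)
  with X show ?thesis by (auto simp: Linf_def)
qed

lemma Linf_diff: "X \<in> Linf P B \<Longrightarrow> Y \<in> Linf P B \<Longrightarrow> (\<lambda>v. X v + -1 * Y v) \<in> Linf P B"
  by (intro Linf_add Linf_cmult)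

lemma Linf_pos_abs: "X \<in> Linf P B \<Longrightarrow> (\<lambda>v. \<bar>X v\<bar>) \<in> Linf_pos P B"
proof -
  assume X: "X \<in> Linf P B"
  then obtain C where "AE w in P. \<bar>X w\<bar> \<le> C" by (auto simp: Linf_def)
  then have "AE w in P. \<bar>\<bar>X w\<bar>\<bar> \<le> C" by simp
  with X show ?thesis by (auto simp: Linf_def Linf_pos_def)
qed

lemma Linf_indicator_mult:
  "X \<in> Linf P B \<Longrightarrow> S \<in> sets B \<Longrightarrow> (\<lambda>v. indicator S v * X v) \<in> Linf P B"
proof -
  assume X: "X \<in> Linf P B" and S: "S \<in> sets B"
  then obtain C where "AE w in P. \<bar>X w\<bar> \<le> C" by (auto simp: Linf_def)
  then have "AE w in P. \<bar>indicator S w * X w\<bar> \<le> \<bar>C\<bar>"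
    by eventually_elim (auto simp: indicator_def)
  with X S show ?thesis by (auto simp: Linf_def)
qed

lemma Linf_pos_zero: "(\<lambda>v. 0) \<in> Linf_pos P B"
  by (auto simp: Linf_def Linf_pos_def)

lemma operator_on_AE_cong:
  "operator_on P D E T \<Longrightarrow> X \<in> D \<Longrightarrow> Y \<in> D \<Longrightarrow> (AE w in P. X w = Y w)
    \<Longrightarrow> AE w in P. T X w = T Y w"
  unfolding operator_on_def by blast

lemma linear_op_add:
  "linear_op P D x \<Longrightarrow> X \<in> D \<Longrightarrow> Y \<in> D \<Longrightarrow> AE w in P. x (\<lambda>v. X v + Y v) w = x X w + x Y w"
  unfolding linear_op_def by blast

lemma linear_op_cmult:
  "linear_op P D x \<Longrightarrow> X \<in> D \<Longrightarrow> AE w in P. x (\<lambda>v. c * X v) w = c * x X w"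
  unfolding linear_op_def by blast

lemma linear_op_diff:
  assumes x: "linear_op P (Linf P B) x" and X: "X \<in> Linf P B" and Y: "Y \<in> Linf P B"
  shows "AE w in P. x (\<lambda>v. X v + -1 * Y v) w = x X w - x Y w"
  using linear_op_add[OF x X Linf_cmult[OF Y, where c = "-1"]] linear_op_cmult[OF x Y, of "-1"]
  by eventually_elim simp

lemma sublinear_op_zero:
  assumes "sublinear_op P (Linf_pos P B) M"
  shows "AE w in P. M (\<lambda>v. 0) w = 0"
proof -
  have "\<forall>c::real. 0 \<le> c \<longrightarrow> (AE w in P. M (\<lambda>v. c * (\<lambda>v. 0) v) w = c * M (\<lambda>v. 0) w)"
    using bspec[OF conjunct2[OF assms[unfolded sublinear_op_def]] Linf_pos_zero] .
  from this[rule_format, of 0] show ?thesis by simp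
qed

lemma monotone_op_if_dominated:
  assumes x: "linear_op P (Linf P B) x" and M: "sublinear_op P (Linf_pos P B) M"
    and dom: "dominated_op P (Linf P B) (Linf_pos P B) x M"
  shows "monotone_op P (Linf P B) x"
  unfolding monotone_op_def
proof (intro ballI impI)
  fix X Y assume X: "X \<in> Linf P B" and Y: "Y \<in> Linf P B" and le: "AE w in P. X w \<le> Y w"
  from le have "AE w in P. X w + -1 * Y w \<le> 0" by eventually_elim simp
  then have "AE w in P. x (\<lambda>v. X v + -1 * Y v) w \<le> M (\<lambda>v. 0) w"
    by (rule dominated_opD[OF dom Linf_diff[OF X Y] Linf_pos_zero])
  with sublinear_op_zero[OF M] linear_op_diff[OF x X Y]
  show "AE w in P. x X w \<le> x Y w" by eventually_elim simp
qed

lemma monotone_op_AE_all: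
  fixes X Y :: "nat \<Rightarrow> 'a \<Rightarrow> real"
  assumes "monotone_op P D T" and "\<And>n. X n \<in> D" and "\<And>n. Y n \<in> D"
    and "AE w in P. \<forall>n. X n w \<le> Y n w"
  shows "AE w in P. \<forall>n. T (X n) w \<le> T (Y n) w"
  unfolding AE_all_countable
proof
  fix n
  from assms(4) have "AE w in P. X n w \<le> Y n w" by eventually_elim blast
  then show "AE w in P. T (X n) w \<le> T (Y n) w"
    using assms(1-3) unfolding monotone_op_def by blast
qed

lemma abs_le_if_dominated:
  assumes x: "linear_op P (Linf P B) x" and dom: "dominated_op P (Linf P B) (Linf_pos P B) x M"
    and Z: "Z \<in> Linf P B"
  shows "AE w in P. \<bar>x Z w\<bar> \<le> M (\<lambda>v. \<bar>Z v\<bar>) w"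
proof -
  have "AE w in P. x Z w \<le> M (\<lambda>v. \<bar>Z v\<bar>) w"
    by (rule dominated_opD[OF dom Z Linf_pos_abs[OF Z]]) simp
  moreover have "AE w in P. x (\<lambda>v. -1 * Z v) w \<le> M (\<lambda>v. \<bar>Z v\<bar>) w"
    by (rule dominated_opD[OF dom Linf_cmult[OF Z] Linf_pos_abs[OF Z]]) simp
  moreover note linear_op_cmult[OF x Z, of "-1"]
  ultimately show ?thesis by eventually_elim auto
qed

lemma indicator_mult_vanishes_off_if_dominated:
  assumes x: "linear_op P (Linf P B) x" and dom: "dominated_op P (Linf P B) (Linf_pos P B) x M"
    and M: "weak_hom_op P A (Linf_pos P B) M"
    and X: "X \<in> Linf P B" and UA: "U \<in> sets A" and UB: "U \<in> sets B"
  shows "AE w in P. w \<notin> U \<longrightarrow> x (\<lambda>v. indicator U v * X v) w = 0"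
proof -
  have "(\<lambda>v. \<bar>indicator U v * X v\<bar>) = (\<lambda>v. indicator U v * \<bar>X v\<bar>)"
    by (auto simp: indicator_def)
  then have "AE w in P. \<bar>x (\<lambda>v. indicator U v * X v) w\<bar> \<le> M (\<lambda>v. indicator U v * \<bar>X v\<bar>) w"
    using abs_le_if_dominated[OF x dom Linf_indicator_mult[OF X UB]] by simp
  moreover have "AE w in P. M (\<lambda>v. indicator U v * \<bar>X v\<bar>) w = indicator U w * M (\<lambda>v. \<bar>X v\<bar>) w"
    using bspec[OF bspec[OF M[unfolded weak_hom_op_def] UA] Linf_pos_abs[OF X]] .
  ultimately show ?thesis by eventually_elim (auto simp: indicator_def)
qed

lemma weak_hom_op_if_dominated:
  assumes "subalgebra P A" and "sets A \<subseteq> sets B"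
    and x_op: "operator_on P (Linf P B) (Linf P A) x" and x: "linear_op P (Linf P B) x"
    and dom: "dominated_op P (Linf P B) (Linf_pos P B) x M"
    and M: "weak_hom_op P A (Linf_pos P B) M"
  shows "weak_hom_op P A (Linf P B) x"
  unfolding weak_hom_op_def
proof (intro ballI)
  fix S X assume SA: "S \<in> sets A" and X: "X \<in> Linf P B"
  define T where "T = space P - S"
  have "space A = space P" using \<open>subalgebra P A\<close> by (simp add: subalgebra_def)
  then have TA: "T \<in> sets A" using sets.compl_sets[OF SA] by (simp add: T_def)
  have SB: "S \<in> sets B" and TB: "T \<in> sets B" using SA TA \<open>sets A \<subseteq> sets B\<close> by auto
  note XS = Linf_indicator_mult[OF X SB] and XT = Linf_indicator_mult[OF X TB]
  have "AE w in P. indicator S w * X w + indicator T w * X w = X w"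
    using AE_space[of P] by eventually_elim (auto simp: T_def indicator_def)
  then have "AE w in P. x (\<lambda>v. indicator S v * X v + indicator T v * X v) w = x X w"
    by (rule operator_on_AE_cong[OF x_op Linf_add[OF XS XT] X])
  moreover note linear_op_add[OF x XS XT]
    indicator_mult_vanishes_off_if_dominated[OF x dom M X SA SB]
    indicator_mult_vanishes_off_if_dominated[OF x dom M X TA TB]
    AE_space[of P]
  ultimately show "AE w in P. x (\<lambda>v. indicator S v * X v) w = indicator S w * x X w"
    by eventually_elim (auto simp: T_def indicator_def)
qed

lemma cont_from_above_op_if_dominated:
  assumes x: "linear_op P (Linf P B) x" and x_mono: "monotone_op P (Linf P B) x"
    and dom: "dominated_op P (Linf P B) (Linf_pos P B) x M"
    and M: "regular_op P (Linf_pos P B) M"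
  shows "cont_from_above_op P (Linf P B) x"
  unfolding cont_from_above_op_def
proof (intro allI impI)
  fix Xs X assume Xs: "\<forall>n. Xs n \<in> Linf P B" and X: "X \<in> Linf P B"
    and dec: "AE w in P. \<forall>n. Xs (Suc n) w \<le> Xs n w"
    and lim: "AE w in P. (\<lambda>n. Xs n w) \<longlonglongrightarrow> X w"
  define Y where "Y n = (\<lambda>v. Xs n v + -1 * X v)" for n
  have ge: "AE w in P. \<forall>n. X w \<le> Xs n w"
    using dec lim by eventually_elim (metis decseq_ge decseq_SucI)
  have Y: "Y n \<in> Linf P B" for n
    unfolding Y_def using Linf_diff Xs X by blast
  have Y_pos: "Y n \<in> Linf_pos P B" for n
  proof -
    have "AE w in P. 0 \<le> Y n w" using ge by eventually_elim (auto simp: Y_def)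
    with Y show ?thesis by (simp add: Linf_pos_def)
  qed
  have "AE w in P. \<forall>n. Y (Suc n) w \<le> Y n w"
    using dec by eventually_elim (auto simp: Y_def)
  moreover have "AE w in P. (\<lambda>n. Y n w) \<longlonglongrightarrow> 0"
    using lim by eventually_elim (auto simp: Y_def intro: LIM_zero)
  ultimately have M_lim: "AE w in P. (\<lambda>n. M (Y n) w) \<longlonglongrightarrow> 0"
    using M Y_pos unfolding regular_op_def by blast
  have x_dec: "AE w in P. \<forall>n. x (Xs (Suc n)) w \<le> x (Xs n) w"
    using monotone_op_AE_all[OF x_mono, of "\<lambda>n. Xs (Suc n)" Xs] Xs dec by blast
  have x_ge: "AE w in P. \<forall>n. x X w \<le> x (Xs n) w"
    using monotone_op_AE_all[OF x_mono, of "\<lambda>n. X" Xs] Xs X ge by blast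
  have x_Y: "AE w in P. \<forall>n. x (Y n) w = x (Xs n) w - x X w"
    unfolding AE_all_countable Y_def using linear_op_diff[OF x] Xs X by blast
  have x_le_M: "AE w in P. \<forall>n. x (Y n) w \<le> M (Y n) w"
    unfolding AE_all_countable using dominated_opD[OF dom] Y Y_pos by blast
  show "AE w in P. (\<forall>n. x (Xs (Suc n)) w \<le> x (Xs n) w) \<and> (\<lambda>n. x (Xs n) w) \<longlonglongrightarrow> x X w"
    using x_dec x_ge x_Y x_le_M M_lim
  proof eventually_elim
    case (elim w)
    have "(\<lambda>n. x (Xs n) w - x X w) \<longlonglongrightarrow> 0"
      by (rule tendsto_sandwich[of "\<lambda>n. 0" _ _ "\<lambda>n. M (Y n) w"]) (use elim in auto)
    with elim show ?case by (simp add: LIM_zero_iff)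
  qed
qed

theorem proposition3p8:
  fixes P \<A> \<B> :: "'a measure"
    and x :: "('a \<Rightarrow> real) \<Rightarrow> ('a \<Rightarrow> real)"
    and M :: "('a \<Rightarrow> real) \<Rightarrow> ('a \<Rightarrow> real)"
  assumes "prob_space P" and "complete_measure P"
    and "subalgebra P \<A>" and "subalgebra P \<B>" and "sets \<A> \<subseteq> sets \<B>"
    and "operator_on P (Linf P \<B>) (Linf P \<A>) x" and "linear_op P (Linf P \<B>) x"
    and "operator_on P (Linf_pos P \<B>) (Linf_pos P \<A>) M"
    and "sublinear_op P (Linf_pos P \<B>) M"
    and dom: "\<And>X Y. X \<in> Linf P \<B> \<Longrightarrow> Y \<in> Linf_pos P \<B> \<Longrightarrow>
               (AE w in P. X w \<le> Y w) \<Longrightarrow> (AE w in P. x X w \<le> M Y w)"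
  shows "monotone_op P (Linf P \<B>) x
    \<and> (weak_hom_op P \<A> (Linf_pos P \<B>) M \<longrightarrow> weak_hom_op P \<A> (Linf P \<B>) x)
    \<and> (regular_op P (Linf_pos P \<B>) M \<longrightarrow> cont_from_above_op P (Linf P \<B>) x)"
proof -
  have dominated: "dominated_op P (Linf P \<B>) (Linf_pos P \<B>) x M"
    using dom by (auto simp: dominated_op_def)
  have mono: "monotone_op P (Linf P \<B>) x"
    using monotone_op_if_dominated assms(7,9) dominated by blast
  show ?thesis
    using mono weak_hom_op_if_dominated[OF assms(3,5,6,7) dominated]
      cont_from_above_op_if_dominated[OF assms(7) mono dominated] by blast
qed

end
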